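(* Let $Q$ be a complete quiver and $j$ a mutable vertex which is cycle-preserving for $Q$ and is not the apex of a vortex subquiver of $Q$. Then every oriented 3-cycle in $\mu_j(Q)$ contains $j$, and $\mu_j(Q)$ is vortex-free.
   Context: A quiver is a finite directed multigraph with no loops and no oriented 2-cycles, whose vertex set is partitioned into mutable and frozen vertices; arrows between two frozen vertices are ignored. $b_{ik}$ = number of arrows $i\to k$ minus number of arrows $k\to i$; $Q|_S$ is the induced subquiver on $S$. Mutation $\mu_j$ at mutable $j$: for each path $i\to j\to k$ add $b_{ij}b_{jk}$ arrows $i\to k$, reverse all arrows at $j$, cancel 2-cycles. A quiver is complete if there is at least one arrow between every pair of vertices at least one of which is mutable. A 3-vertex (sub)quiver is an oriented 3-cycle if it has at most one frozen vertex and its underlying directed graph is not acyclic. A mutable vertex $j$ is cycle-preserving for $Q$ if whenever $Q|_{\{i,j,k\}}$ is an oriented 3-cycle containing $j$, so is $\mu_j(Q)|_{\{i,j,k\}}$. A vortex is a quiver on four vertices, at least three of them mutable, in which one vertex (the apex) is a source or a sink and the other three vertices support an oriented cycle. A vertex is the apex of a vortex in $Q$ if it is the apex of some 4-vertex induced subquiver which is a vortex; $Q$ is vortex-free if no 4-vertex induced subquiver is a vortex. *)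

theory Defs
  imports Main
begin

text \<open>A quiver is encoded by its finite vertex set V, its set of mutable vertices
M (frozen vertices are V - M), and its exchange matrix b, where b i k is the number
of arrows i to k minus the number of arrows k to i.  Since quivers have no loops and
no oriented 2-cycles, this encodes the quiver exactly.  Entries between two frozen
vertices are irrelevant (such arrows are ignored) and none of the notions below
looks at them.\<close>

definition quiver :: "'a set \<Rightarrow> 'a set \<Rightarrow> ('a \<Rightarrow> 'a \<Rightarrow> int) \<Rightarrow> bool" where
  "quiver V M b \<longleftrightarrow> finite V \<and> M \<subseteq> V
     \<and> (\<forall>i k. b i k = - b k i)
     \<and> (\<forall>i k. b i k \<noteq> 0 \<longrightarrow> i \<in> V \<and> k \<in> V)"

definition arrows_on :: "('a \<Rightarrow> 'a \<Rightarrow> int) \<Rightarrow> 'a set \<Rightarrow> ('a \<times> 'a) set" where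
  "arrows_on b S = {(x, y). x \<in> S \<and> y \<in> S \<and> b x y > 0}"

text \<open>Mutation at j: for each path i -> j -> k add b_ij b_jk arrows i -> k,
reverse all arrows at j, cancel 2-cycles.\<close>
definition mutate :: "('a \<Rightarrow> 'a \<Rightarrow> int) \<Rightarrow> 'a \<Rightarrow> ('a \<Rightarrow> 'a \<Rightarrow> int)" where
  "mutate b j = (\<lambda>i k. if i = j \<or> k = j then - b i k
      else b i k + max 0 (b i j) * max 0 (b j k) - max 0 (b k j) * max 0 (b j i))"

definition complete_quiver :: "'a set \<Rightarrow> 'a set \<Rightarrow> ('a \<Rightarrow> 'a \<Rightarrow> int) \<Rightarrow> bool" where
  "complete_quiver V M b \<longleftrightarrow>
     (\<forall>i\<in>V. \<forall>k\<in>V. i \<noteq> k \<and> (i \<in> M \<or> k \<in> M) \<longrightarrow> b i k \<noteq> 0)"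

definition oriented_3cycle ::
  "'a set \<Rightarrow> 'a set \<Rightarrow> ('a \<Rightarrow> 'a \<Rightarrow> int) \<Rightarrow> 'a \<Rightarrow> 'a \<Rightarrow> 'a \<Rightarrow> bool" where
  "oriented_3cycle V M b i j k \<longleftrightarrow>
     distinct [i, j, k] \<and> {i, j, k} \<subseteq> V \<and> card ({i, j, k} - M) \<le> 1
     \<and> \<not> acyclic (arrows_on b {i, j, k})"

definition cycle_preserving :: "'a set \<Rightarrow> 'a set \<Rightarrow> ('a \<Rightarrow> 'a \<Rightarrow> int) \<Rightarrow> 'a \<Rightarrow> bool" where
  "cycle_preserving V M b j \<longleftrightarrow> j \<in> M \<and>
     (\<forall>i k. oriented_3cycle V M b i j k \<longrightarrow> oriented_3cycle V M (mutate b j) i j k)"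

definition source_or_sink_in :: "('a \<Rightarrow> 'a \<Rightarrow> int) \<Rightarrow> 'a set \<Rightarrow> 'a \<Rightarrow> bool" where
  "source_or_sink_in b S a \<longleftrightarrow>
     (\<forall>x\<in>S. \<not> b x a > 0) \<or> (\<forall>x\<in>S. \<not> b a x > 0)"

definition vortex_with_apex ::
  "'a set \<Rightarrow> 'a set \<Rightarrow> ('a \<Rightarrow> 'a \<Rightarrow> int) \<Rightarrow> 'a \<Rightarrow> 'a \<Rightarrow> 'a \<Rightarrow> 'a \<Rightarrow> bool" where
  "vortex_with_apex V M b a x y z \<longleftrightarrow>
     distinct [a, x, y, z] \<and> {a, x, y, z} \<subseteq> V \<and> card ({a, x, y, z} - M) \<le> 1
     \<and> source_or_sink_in b {a, x, y, z} a
     \<and> \<not> acyclic (arrows_on b {x, y, z})"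

definition is_vortex_apex :: "'a set \<Rightarrow> 'a set \<Rightarrow> ('a \<Rightarrow> 'a \<Rightarrow> int) \<Rightarrow> 'a \<Rightarrow> bool" where
  "is_vortex_apex V M b a \<longleftrightarrow> (\<exists>x y z. vortex_with_apex V M b a x y z)"

definition vortex_free :: "'a set \<Rightarrow> 'a set \<Rightarrow> ('a \<Rightarrow> 'a \<Rightarrow> int) \<Rightarrow> bool" where
  "vortex_free V M b \<longleftrightarrow> (\<forall>a x y z. \<not> vortex_with_apex V M b a x y z)"

end

theory Submission
  imports Defs
begin

(* Mutation at j changes the arrow between u and v only along a path u -> j -> v (or back),
   and then cycle preservation forces u -> v afterwards: if v -> u before, then u, j, v was a
   3-cycle, which can only survive the reversal of the arrows at j as u -> v -> j -> u.
   Hence, in a 3-cycle of mu_j(Q) avoiding j, a vertex lying on the other side of j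
   (u -> j versus j -> u) than the remaining two would be a source or a sink of that cycle.
   So all three lie on the same side, the cycle was already a 3-cycle of Q, and j is a source
   or sink on it: a vortex with apex j.
   In a vortex of mu_j(Q) the cycle therefore passes through j, giving y -> j -> z in Q for
   the other two cycle vertices.  The apex a is joined to j; if j -> a in Q then mu_j(Q) has
   y -> a -> j, and if a -> j then j -> a -> z, so a is neither a source nor a sink. *)

definition skew :: "('a \<Rightarrow> 'a \<Rightarrow> int) \<Rightarrow> bool" where
  "skew B \<longleftrightarrow> (\<forall>u v. B u v = - B v u)"

definition cyclic3 :: "('a \<Rightarrow> 'a \<Rightarrow> int) \<Rightarrow> 'a \<Rightarrow> 'a \<Rightarrow> 'a \<Rightarrow> bool" where
  "cyclic3 B x y z \<longleftrightarrow>
     (0 < B x y \<and> 0 < B y z \<and> 0 < B z x) \<or> (0 < B x z \<and> 0 < B z y \<and> 0 < B y x)"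

lemma skewD: "skew B \<Longrightarrow> B u v = - B v u"
  unfolding skew_def by blast

lemma skew_diag: "skew B \<Longrightarrow> B u u = 0"
  using skewD[of B u u] by simp

lemma cyclic3_in_out_arrows:
  assumes "cyclic3 B x y z" and "u \<in> {x, y, z}"
  shows "\<exists>v\<in>{x, y, z}. 0 < B u v" and "\<exists>w\<in>{x, y, z}. 0 < B w u"
  using assms by (auto simp: cyclic3_def)

lemma acyclic_if_rank_increasing:
  fixes f :: "'a \<Rightarrow> nat"
  assumes "\<And>u v. (u, v) \<in> r \<Longrightarrow> f u < f v"
  shows "acyclic r"
proof -
  have "r \<subseteq> inv_image less_than f"
    using assms by auto
  then show ?thesis
    using wf_acyclic wf_inv_image wf_less_than wf_subset by metis
qed

lemma acyclic_arrows_on_ordered: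
  assumes "B q p \<le> 0" "B r p \<le> 0" "B r q \<le> 0"
    and "skew B" and "distinct [p, q, r]" and "{p, q, r} = S"
  shows "acyclic (arrows_on B S)"
proof (rule acyclic_if_rank_increasing)
  fix u v
  assume "(u, v) \<in> arrows_on B S"
  then have "u \<in> {p, q, r}" "v \<in> {p, q, r}" "0 < B u v"
    using assms(6) by (auto simp: arrows_on_def)
  then show "(if u = p then 0 else if u = q then 1 else 2::nat)
      < (if v = p then 0 else if v = q then 1 else 2)"
    using assms(1-3,5) skew_diag[OF \<open>skew B\<close>, of u] by auto
qed

lemma not_acyclic_arrows_on_iff_cyclic3:
  assumes "skew B" and "distinct [x, y, z]"
  shows "\<not> acyclic (arrows_on B {x, y, z}) \<longleftrightarrow> cyclic3 B x y z"
proof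
  assume "cyclic3 B x y z"
  then consider "(x, y) \<in> arrows_on B {x, y, z}" "(y, z) \<in> arrows_on B {x, y, z}"
      "(z, x) \<in> arrows_on B {x, y, z}"
    | "(x, z) \<in> arrows_on B {x, y, z}" "(z, y) \<in> arrows_on B {x, y, z}"
      "(y, x) \<in> arrows_on B {x, y, z}"
    by (auto simp: cyclic3_def arrows_on_def)
  then have "(x, x) \<in> (arrows_on B {x, y, z})\<^sup>+"
    by cases (blast intro: trancl_into_trancl)+
  then show "\<not> acyclic (arrows_on B {x, y, z})"
    by (auto simp: acyclic_def)
next
  assume "\<not> acyclic (arrows_on B {x, y, z})"
  moreover have "acyclic (arrows_on B {x, y, z})" if "\<not> cyclic3 B x y z"
  proof -
    have "B y x = - B x y" "B z y = - B y z" "B x z = - B z x"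
      using skewD[OF \<open>skew B\<close>] by blast+
    txt \<open>One of the six orderings of x, y, z has no backward arrow.\<close>
    then have "(B y x \<le> 0 \<and> B z x \<le> 0 \<and> B z y \<le> 0) \<or> (B z x \<le> 0 \<and> B y x \<le> 0 \<and> B y z \<le> 0)
        \<or> (B x y \<le> 0 \<and> B z y \<le> 0 \<and> B z x \<le> 0) \<or> (B z y \<le> 0 \<and> B x y \<le> 0 \<and> B x z \<le> 0)
        \<or> (B x z \<le> 0 \<and> B y z \<le> 0 \<and> B y x \<le> 0) \<or> (B y z \<le> 0 \<and> B x z \<le> 0 \<and> B x y \<le> 0)"
      using \<open>\<not> cyclic3 B x y z\<close> unfolding cyclic3_def by smt
    then show ?thesis
      using assms(2)
      by (elim disjE conjE)
        (rule acyclic_arrows_on_ordered[OF _ _ _ \<open>skew B\<close>],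
          assumption, assumption, assumption, force, force)+
  qed
  ultimately show "cyclic3 B x y z"
    by blast
qed

lemma card_diff_le_one_iff:
  "finite S \<Longrightarrow> card (S - M) \<le> 1 \<longleftrightarrow> (\<forall>u\<in>S. \<forall>v\<in>S. u \<noteq> v \<longrightarrow> u \<in> M \<or> v \<in> M)"
  using card_le_Suc0_iff_eq[of "S - M"] by auto

lemma oriented_3cycle_iff:
  assumes "skew B"
  shows "oriented_3cycle V M B i j k \<longleftrightarrow> distinct [i, j, k] \<and> {i, j, k} \<subseteq> V
    \<and> card ({i, j, k} - M) \<le> 1 \<and> cyclic3 B i j k"
  unfolding oriented_3cycle_def using not_acyclic_arrows_on_iff_cyclic3[OF assms] by blast

lemma skew_mutate:
  assumes "skew b"
  shows "skew (mutate b j)"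
  unfolding skew_def
proof (intro allI)
  fix u v
  show "mutate b j u v = - mutate b j v u"
    using skewD[OF assms, of u v] by (auto simp: mutate_def)
qed

lemma mutate_at_center [simp]: "mutate b j j k = - b j k" "mutate b j i j = - b i j"
  by (simp_all add: mutate_def)

lemma mutate_path:
  assumes "skew b" and "i \<noteq> j" "k \<noteq> j" and "0 < b i j" "0 < b j k"
  shows "mutate b j i k = b i k + b i j * b j k"
  using assms skewD[OF assms(1), of k j] by (simp add: mutate_def)

lemma mutate_no_path:
  assumes "i \<noteq> j" "k \<noteq> j" and "\<not> (0 < b i j \<and> 0 < b j k)" "\<not> (0 < b k j \<and> 0 < b j i)"
  shows "mutate b j i k = b i k"
  using assms by (auto simp: mutate_def max_def)

context
  fixes V M :: "'a set" and b :: "'a \<Rightarrow> 'a \<Rightarrow> int" and j :: 'a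
  assumes quiver: "quiver V M b"
    and complete: "complete_quiver V M b"
    and preserving: "cycle_preserving V M b j"
begin

lemma skew_exchange_matrix: "skew b"
  using quiver unfolding quiver_def skew_def by blast

lemma skew_mutated: "skew (mutate b j)"
  using skew_mutate[OF skew_exchange_matrix] .

lemma center_mutable: "j \<in> M"
  using preserving unfolding cycle_preserving_def by blast

lemma center_in_vertices: "j \<in> V"
  using quiver center_mutable unfolding quiver_def by blast

lemma arrow_nonzero: "u \<in> V \<Longrightarrow> v \<in> V \<Longrightarrow> u \<noteq> v \<Longrightarrow> u \<in> M \<or> v \<in> M \<Longrightarrow> b u v \<noteq> 0"
  using complete unfolding complete_quiver_def by blast

lemma cyclic3_mutate_preserved:
  assumes "u \<in> V" "w \<in> V" "distinct [u, j, w]" "u \<in> M \<or> w \<in> M" and "cyclic3 b u j w"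
  shows "cyclic3 (mutate b j) u j w"
proof -
  have "card ({u, j, w} - M) \<le> 1"
    using assms(4) center_mutable by (subst card_diff_le_one_iff) auto
  then have "oriented_3cycle V M b u j w"
    using assms center_in_vertices by (simp add: oriented_3cycle_iff[OF skew_exchange_matrix])
  then have "oriented_3cycle V M (mutate b j) u j w"
    using preserving unfolding cycle_preserving_def by blast
  then show ?thesis
    by (simp add: oriented_3cycle_iff[OF skew_mutated])
qed

lemma mutate_arrow_through_center:
  assumes "u \<in> V" "v \<in> V" "u \<noteq> v" "u \<in> M \<or> v \<in> M" and "0 < b u j" "0 < b j v"
  shows "0 < mutate b j u v"
proof -
  have "u \<noteq> j" "v \<noteq> j"
    using assms(5,6) skew_diag[OF skew_exchange_matrix] by auto
  show ?thesis
  proof (cases "0 < b u v")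
    case True
    then show ?thesis
      using mutate_path[OF skew_exchange_matrix \<open>u \<noteq> j\<close> \<open>v \<noteq> j\<close> assms(5,6)] assms(5,6)
      by (simp add: add_pos_pos)
  next
    txt \<open>u, j, v is a 3-cycle of Q; mutation reverses u -> j, so the cycle it preserves must
      be u -> v -> j -> u.\<close>
    case False
    then have "0 < b v u"
      using arrow_nonzero[OF assms(1-4)] skewD[OF skew_exchange_matrix, of u v] by linarith
    then have "cyclic3 b u j v"
      using assms(5,6) by (simp add: cyclic3_def)
    then have "cyclic3 (mutate b j) u j v"
      using cyclic3_mutate_preserved assms(1-4) \<open>u \<noteq> j\<close> \<open>v \<noteq> j\<close> by simp
    then show ?thesis
      using assms(5) by (auto simp: cyclic3_def)
  qed
qed

lemma mutated_3cycle_same_side: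
  assumes "oriented_3cycle V M (mutate b j) i k l" and "j \<notin> {i, k, l}"
  shows "(0 < b j i \<longleftrightarrow> 0 < b j k) \<and> (0 < b j k \<longleftrightarrow> 0 < b j l)"
proof -
  let ?C = "{i, k, l}"
  have distinct: "distinct [i, k, l]" and "?C \<subseteq> V" and cycle: "cyclic3 (mutate b j) i k l"
    and frozen: "\<forall>p\<in>?C. \<forall>q\<in>?C. p \<noteq> q \<longrightarrow> p \<in> M \<or> q \<in> M"
    using assms(1) oriented_3cycle_iff[OF skew_mutated]
      card_diff_le_one_iff[of ?C M] by auto
  have nonzero: "b j p \<noteq> 0" if "p \<in> ?C" for p
    using arrow_nonzero center_in_vertices center_mutable assms(2) \<open>?C \<subseteq> V\<close> that by blast
  have no_path: "\<not> (0 < b p j \<and> 0 < b j q)" if "p \<in> ?C" "q \<in> ?C" "0 < mutate b j q p" for p q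
  proof
    assume "0 < b p j \<and> 0 < b j q"
    moreover have "p \<noteq> q"
      using that(3) skew_diag[OF skew_mutated] by force
    ultimately have "0 < mutate b j p q"
      using mutate_arrow_through_center frozen that(1,2) \<open>?C \<subseteq> V\<close> by blast
    then show False
      using that(3) skewD[OF skew_mutated, of p q] by linarith
  qed
  have partner: "\<exists>v\<in>?C. v \<noteq> u \<and> (0 < b j v \<longleftrightarrow> 0 < b j u)" if "u \<in> ?C" for u
  proof (cases "0 < b j u")
    case True
    obtain w where "w \<in> ?C" "0 < mutate b j u w"
      using cyclic3_in_out_arrows(1)[OF cycle \<open>u \<in> ?C\<close>] by blast
    moreover have "w \<noteq> u"
      using \<open>0 < mutate b j u w\<close> skew_diag[OF skew_mutated] by force
    ultimately show ?thesis
      using True no_path[of w u] nonzero[of w] that skewD[OF skew_exchange_matrix, of w j] by force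
  next
    case False
    obtain w where "w \<in> ?C" "0 < mutate b j w u"
      using cyclic3_in_out_arrows(2)[OF cycle \<open>u \<in> ?C\<close>] by blast
    moreover have "w \<noteq> u"
      using \<open>0 < mutate b j w u\<close> skew_diag[OF skew_mutated] by force
    ultimately show ?thesis
      using False no_path[of u w] nonzero[of u] that skewD[OF skew_exchange_matrix, of u j] by force
  qed
  show ?thesis
    using partner[of i] partner[of k] partner[of l] distinct by auto
qed

lemma mutated_3cycle_contains_center:
  assumes "\<not> is_vortex_apex V M b j" and "oriented_3cycle V M (mutate b j) i k l"
  shows "j \<in> {i, k, l}"
proof (rule ccontr)
  assume "j \<notin> {i, k, l}"
  have same_side: "0 < b j p \<longleftrightarrow> 0 < b j q" if "p \<in> {i, k, l}" "q \<in> {i, k, l}" for p q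
    using mutated_3cycle_same_side[OF assms(2) \<open>j \<notin> {i, k, l}\<close>] that by auto
  have unchanged: "mutate b j p q = b p q" if "p \<in> {i, k, l}" "q \<in> {i, k, l}" for p q
  proof (rule mutate_no_path)
    show "p \<noteq> j" "q \<noteq> j"
      using that \<open>j \<notin> {i, k, l}\<close> by auto
    show "\<not> (0 < b p j \<and> 0 < b j q)" "\<not> (0 < b q j \<and> 0 < b j p)"
      using same_side[OF that] skewD[OF skew_exchange_matrix, of p j]
        skewD[OF skew_exchange_matrix, of q j] by auto
  qed
  have "distinct [i, k, l]" "{i, k, l} \<subseteq> V" "card ({i, k, l} - M) \<le> 1"
    and "cyclic3 (mutate b j) i k l"
    using assms(2) oriented_3cycle_iff[OF skew_mutated] by auto
  then have "cyclic3 b i k l"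
    using unchanged by (simp add: cyclic3_def)
  moreover have "source_or_sink_in b {j, i, k, l} j"
  proof (cases "0 < b j i")
    case True
    then have "b p j < 0" if "p \<in> {i, k, l}" for p
      using same_side[OF _ that, of i] skewD[OF skew_exchange_matrix, of p j] by simp
    then show ?thesis
      using skew_diag[OF skew_exchange_matrix, of j] unfolding source_or_sink_in_def by force
  next
    case False
    then have "\<not> 0 < b j p" if "p \<in> {i, k, l}" for p
      using same_side[OF _ that, of i] by simp
    then show ?thesis
      using skew_diag[OF skew_exchange_matrix, of j] unfolding source_or_sink_in_def by force
  qed
  moreover have "{j, i, k, l} - M = {i, k, l} - M"
    using center_mutable by auto
  ultimately have "vortex_with_apex V M b j i k l"
    unfolding vortex_with_apex_def
    using \<open>j \<notin> {i, k, l}\<close> \<open>distinct [i, k, l]\<close> \<open>{i, k, l} \<subseteq> V\<close> \<open>card ({i, k, l} - M) \<le> 1\<close>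
      center_in_vertices not_acyclic_arrows_on_iff_cyclic3[OF skew_exchange_matrix] by auto
  then show False
    using assms(1) unfolding is_vortex_apex_def by blast
qed

lemma apex_not_source_or_sink_after_mutation:
  assumes "a \<in> V" "y \<in> V" "z \<in> V" "a \<noteq> j" "a \<noteq> y" "a \<noteq> z" "a \<in> M \<or> y \<in> M" "a \<in> M \<or> z \<in> M"
    and "0 < b y j" "0 < b j z" and "{j, y, z} \<subseteq> S"
  shows "\<not> source_or_sink_in (mutate b j) S a"
proof -
  have "b j a \<noteq> 0"
    using arrow_nonzero center_in_vertices center_mutable assms(1,4) by blast
  then consider "0 < b j a" | "0 < b a j"
    using skewD[OF skew_exchange_matrix, of a j] by linarith
  then show ?thesis
  proof cases
    case 1
    then have "0 < mutate b j y a" "0 < mutate b j a j"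
      using mutate_arrow_through_center[of y a] assms skewD[OF skew_exchange_matrix, of a j] by auto
    then show ?thesis
      using assms(11) unfolding source_or_sink_in_def by blast
  next
    case 2
    then have "0 < mutate b j a z" "0 < mutate b j j a"
      using mutate_arrow_through_center[of a z] assms skewD[OF skew_exchange_matrix, of a j] by auto
    then show ?thesis
      using assms(11) unfolding source_or_sink_in_def by blast
  qed
qed

lemma mutate_vortex_free:
  assumes "\<not> is_vortex_apex V M b j"
  shows "vortex_free V M (mutate b j)"
  unfolding vortex_free_def
proof (intro allI notI)
  fix a x y z
  assume "vortex_with_apex V M (mutate b j) a x y z"
  then have "distinct [a, x, y, z]" "{a, x, y, z} \<subseteq> V" and card: "card ({a, x, y, z} - M) \<le> 1"
    and apex: "source_or_sink_in (mutate b j) {a, x, y, z} a"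
    and "\<not> acyclic (arrows_on (mutate b j) {x, y, z})"
    unfolding vortex_with_apex_def by auto
  then have cycle: "cyclic3 (mutate b j) x y z"
    using not_acyclic_arrows_on_iff_cyclic3[OF skew_mutated] by simp
  have frozen: "\<forall>p\<in>{a, x, y, z}. \<forall>q\<in>{a, x, y, z}. p \<noteq> q \<longrightarrow> p \<in> M \<or> q \<in> M"
    using card card_diff_le_one_iff[of "{a, x, y, z}" M] by simp
  then have "card ({x, y, z} - M) \<le> 1"
    by (subst card_diff_le_one_iff) auto
  then have "oriented_3cycle V M (mutate b j) x y z"
    using \<open>distinct [a, x, y, z]\<close> \<open>{a, x, y, z} \<subseteq> V\<close> cycle
    by (simp add: oriented_3cycle_iff[OF skew_mutated])
  then have "j \<in> {x, y, z}"
    using mutated_3cycle_contains_center[OF assms] by blast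
  then obtain y' z' where "y' \<in> {x, y, z}" "0 < mutate b j j y'"
    and "z' \<in> {x, y, z}" "0 < mutate b j z' j"
    using cyclic3_in_out_arrows[OF cycle] by blast
  moreover have "a \<notin> {x, y, z}" "a \<in> V" "{x, y, z} \<subseteq> V"
    using \<open>distinct [a, x, y, z]\<close> \<open>{a, x, y, z} \<subseteq> V\<close> by auto
  moreover have "0 < b y' j" "0 < b j z'"
    using \<open>0 < mutate b j j y'\<close> \<open>0 < mutate b j z' j\<close>
      skewD[OF skew_exchange_matrix, of j y'] skewD[OF skew_exchange_matrix, of z' j] by simp_all
  ultimately have "\<not> source_or_sink_in (mutate b j) {a, x, y, z} a"
    using apex_not_source_or_sink_after_mutation[of a y' z' "{a, x, y, z}"] \<open>j \<in> {x, y, z}\<close> frozen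
    by blast
  then show False
    using apex by contradiction
qed

end

theorem mainTheorem4:
  fixes V M :: "'a set" and b :: "'a \<Rightarrow> 'a \<Rightarrow> int" and j :: 'a
  assumes "quiver V M b"
    and "complete_quiver V M b"
    and "j \<in> M"
    and "cycle_preserving V M b j"
    and "\<not> is_vortex_apex V M b j"
  shows "(\<forall>i k l. oriented_3cycle V M (mutate b j) i k l \<longrightarrow> j \<in> {i, k, l})
         \<and> vortex_free V M (mutate b j)"
  \<comment> \<open>The hypothesis j \<in> M is already part of cycle_preserving.\<close>
  using mutated_3cycle_contains_center[OF assms(1,2,4,5)] mutate_vortex_free[OF assms(1,2,4,5)]
  by blast

end
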